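(* Let $\gamma>0$, $n\ge2$, and let $\mu$ be a distribution on $\mathbb{R}$ with $\bar\mu(x)>0$ for all $x\in\mathbb{R}$ and $\mu^{n*}\in\mathcal{S}(\gamma)$. Let $d:=\mu([0,\infty))$. Then for any sequence $\{x_k\}$ with $x_k\to\infty$ there is a subsequence $\{\lambda_k\}$ of $\{x_k\}$ belonging to $\Lambda_1$. Moreover, for every $\{\lambda_k\}\in\Lambda_1$, the function $x\mapsto m(x;\{\lambda_k\})$ is (weakly) decreasing and finite, and $$M(x;\{\lambda_k\}):=e^{\gamma x}m(x;\{\lambda_k\})\le d^{1-n}\quad\text{for all }x\in\mathbb{R}.$$
   Context: For a probability distribution $\rho$ on $\mathbb{R}$: $\bar\rho(x):=\rho((x,\infty))$, $\rho^{n*}$ is the $n$-th convolution power, $\widehat\rho(\gamma):=\int e^{\gamma x}\rho(dx)$. $f\sim g$ means $f(x)/g(x)\to1$ as $x\to\infty$. For $\gamma\ge0$: $\rho\in\mathcal{L}(\gamma)$ if $\bar\rho(x)>0$ for all $x$ and $\bar\rho(x+a)\sim e^{-\gamma a}\bar\rho(x)$ for every $a$; $\rho\in\mathcal{S}(\gamma)$ if $\rho\in\mathcal{L}(\gamma)$, $\widehat\rho(\gamma)<\infty$ and $\overline{\rho^{2*}}(x)\sim2\widehat\rho(\gamma)\bar\rho(x)$. $\Lambda_1$ is the set of increasing sequences $\{\lambda_k\}_{k\ge1}$ with $\lambda_k\to\infty$ such that for every $x\in\mathbb{R}$ the limit $m(x;\{\lambda_k\}):=\lim_{k\to\infty}\bar\mu(\lambda_k+x)/\overline{\mu^{n*}}(\lambda_k)$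 exists and is finite. *)

theory Defs
  imports "HOL-Probability.Probability" "HOL-Probability.Convolution" "HOL-Library.Landau_Symbols"
begin

definition tail :: "real measure \<Rightarrow> real \<Rightarrow> real" where
  "tail \<rho> x = measure \<rho> {x<..}"

primrec conv_pow :: "real measure \<Rightarrow> nat \<Rightarrow> real measure" where
  "conv_pow \<rho> 0 = return borel 0"
| "conv_pow \<rho> (Suc n) = convolution \<rho> (conv_pow \<rho> n)"

definition mgf :: "real measure \<Rightarrow> real \<Rightarrow> ennreal" where
  "mgf \<rho> \<gamma> = (\<integral>\<^sup>+ x. ennreal (exp (\<gamma> * x)) \<partial>\<rho>)"

definition class_L :: "real \<Rightarrow> real measure set" where
  "class_L \<gamma> = {\<rho>. (\<forall>x. tail \<rho> x > 0) \<and>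
      (\<forall>a. (\<lambda>x. tail \<rho> (x + a)) \<sim>[at_top] (\<lambda>x. exp (- \<gamma> * a) * tail \<rho> x))}"

definition class_S :: "real \<Rightarrow> real measure set" where
  "class_S \<gamma> = {\<rho>. \<rho> \<in> class_L \<gamma> \<and> mgf \<rho> \<gamma> < \<infinity> \<and>
      (\<lambda>x. tail (convolution \<rho> \<rho>) x) \<sim>[at_top] (\<lambda>x. 2 * enn2real (mgf \<rho> \<gamma>) * tail \<rho> x)}"

definition Lambda1 :: "real measure \<Rightarrow> nat \<Rightarrow> (nat \<Rightarrow> real) set" where
  "Lambda1 \<mu> n = {l. incseq l \<and> filterlim l at_top sequentially \<and>
      (\<forall>x. convergent (\<lambda>k. tail \<mu> (l k + x) / tail (conv_pow \<mu> n) (l k)))}"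

definition mlim :: "real measure \<Rightarrow> nat \<Rightarrow> (nat \<Rightarrow> real) \<Rightarrow> real \<Rightarrow> real" where
  "mlim \<mu> n l x = lim (\<lambda>k. tail \<mu> (l k + x) / tail (conv_pow \<mu> n) (l k))"

end

theory Submission
  imports Defs
begin

(* Write d = mu [0, oo) and let nu be the n-th convolution power of mu. The event
   {X_1 > x, X_2 >= 0, ..., X_n >= 0} gives tail mu x * d^(n-1) <= tail nu x. Hence, along any
   l_k -> oo, the ratio tail mu (l_k + x) / tail nu (l_k) is at most d^(1-n) times
   tail nu (l_k + x) / tail nu (l_k), which tends to exp (-gamma x) because nu is in L(gamma).
   So for each x the ratios are bounded, and as functions of x they are decreasing and
   right-continuous; a Helly-type selection gives a subsequence along which they converge for
   every x, and monotonicity and the bound d^(1-n) exp (-gamma x) pass to the limit.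
   Only the L(gamma) part of nu in S(gamma) is used. *)

lemma real_distribution_convolution:
  assumes "real_distribution M" "real_distribution N"
  shows "real_distribution (convolution M N)"
proof -
  interpret M: real_distribution M by fact
  interpret N: real_distribution N by fact
  interpret pair_prob_space M N ..
  have "prob_space (convolution M N)"
    unfolding convolution_def by (rule prob_space_distr) simp
  then show ?thesis
    by (simp add: real_distribution_def real_distribution_axioms_def convolution_def)
qed

lemma real_distribution_conv_pow:
  assumes "real_distribution M"
  shows "real_distribution (conv_pow M k)"
proof (induction k)
  case 0
  show ?case
    by (simp add: real_distribution_def real_distribution_axioms_def prob_space_return)
next
  case (Suc k)
  then show ?case
    using assms by (simp add: real_distribution_convolution)
qed

lemma measure_convolution_ge:
  assumes "real_distribution M" "real_distribution N"
    and "A \<in> sets borel" "B \<in> sets borel" "C \<in> sets borel"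
    and "\<And>a b. a \<in> A \<Longrightarrow> b \<in> B \<Longrightarrow> a + b \<in> C"
  shows "measure M A * measure N B \<le> measure (convolution M N) C"
proof -
  interpret M: real_distribution M by fact
  interpret N: real_distribution N by fact
  interpret pair_prob_space M N ..
  have sum_measurable: "(\<lambda>(x, y). x + y) \<in> borel_measurable (M \<Otimes>\<^sub>M N)"
    by measurable
  have "measure M A * measure N B = measure (M \<Otimes>\<^sub>M N) (A \<times> B)"
    using assms(3,4) N.emeasure_pair_measure_Times[of A M B]
    by (simp add: measure_def enn2real_mult)
  also have "\<dots> \<le> measure (M \<Otimes>\<^sub>M N) ((\<lambda>(x, y). x + y) -` C \<inter> space (M \<Otimes>\<^sub>M N))"
    using assms(3-6) measurable_sets[OF sum_measurable assms(5)]
    by (intro finite_measure_mono) (auto simp: space_pair_measure)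
  also have "\<dots> = measure (convolution M N) C"
    using assms(5) by (simp add: convolution_def measure_distr)
  finally show ?thesis .
qed

lemma measure_conv_pow_nonneg_ge:
  assumes "real_distribution M"
  shows "measure M {0..} ^ k \<le> measure (conv_pow M k) {0..}"
proof (induction k)
  case 0
  show ?case by (simp add: measure_return)
next
  case (Suc k)
  have "measure M {0..} ^ Suc k \<le> measure M {0..} * measure (conv_pow M k) {0..}"
    using Suc by (simp add: mult_left_mono)
  also have "\<dots> \<le> measure (conv_pow M (Suc k)) {0..}"
    using assms real_distribution_conv_pow[OF assms]
    by (simp, intro measure_convolution_ge) auto
  finally show ?case .
qed

lemma tail_conv_pow_Suc_ge:
  assumes "real_distribution M"
  shows "tail M x * measure M {0..} ^ k \<le> tail (conv_pow M (Suc k)) x"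
proof -
  have "tail M x * measure M {0..} ^ k \<le> tail M x * measure (conv_pow M k) {0..}"
    using measure_conv_pow_nonneg_ge[OF assms] by (simp add: tail_def mult_left_mono)
  also have "\<dots> \<le> tail (conv_pow M (Suc k)) x"
    using assms real_distribution_conv_pow[OF assms]
    unfolding tail_def by (simp, intro measure_convolution_ge) auto
  finally show ?thesis .
qed

lemma tail_nonneg: "0 \<le> tail M x"
  by (simp add: tail_def)

context real_distribution
begin

lemma antimono_tail: "antimono (tail M)"
  by (intro antimonoI) (auto simp: tail_def intro!: finite_measure_mono)

lemma tail_eq_1_minus_cdf: "tail M x = 1 - cdf M x"
proof -
  have "prob (space M - {..x}) = 1 - prob {..x}"
    by (rule prob_compl) simp
  moreover have "space M - {..x} = {x<..}"
    by auto
  ultimately show ?thesis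
    by (simp add: tail_def cdf_def)
qed

lemma tail_shift_continuous_at_right: "continuous (at_right x) (\<lambda>y. tail M (c + y))"
proof (rule continuous_within_compose2[where f = "\<lambda>y. c + y" and g = "tail M"])
  show "continuous (at_right x) (\<lambda>y. c + y)"
    by (intro continuous_intros)
  have "(\<lambda>y. c + y) ` {x<..} = {c + x<..}"
    by (auto simp: image_iff algebra_simps intro!: bexI[of _ "_ - c"])
  then show "continuous (at (c + x) within (\<lambda>y. c + y) ` {x<..}) (tail M)"
    using cdf_is_right_cont[of "c + x"]
    by (simp add: tail_eq_1_minus_cdf[abs_def] continuous_intros)
qed

end

lemma Bseq_convergent_subseq:
  fixes X :: "nat \<Rightarrow> real"
  assumes "Bseq X"
  shows "\<exists>r. strict_mono r \<and> convergent (X \<circ> r)"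
proof -
  obtain r where "strict_mono r" "monoseq (\<lambda>k. X (r k))"
    using seq_monosub by blast
  then show ?thesis
    using Bseq_monoseq_convergent[OF Bseq_subseq[OF assms]] by (auto simp: comp_def)
qed

lemma countable_convergent_subseq:
  fixes f :: "nat \<Rightarrow> 'a \<Rightarrow> real"
  assumes "countable D" and bounded: "\<And>x. x \<in> D \<Longrightarrow> Bseq (\<lambda>k. f k x)"
  shows "\<exists>s. strict_mono s \<and> (\<forall>x\<in>D. convergent (\<lambda>k. f (s k) x))"
proof (cases "D = {}")
  case True
  then show ?thesis
    using strict_mono_id by blast
next
  case False
  define r where "r = from_nat_into D"
  have range_r: "range r = D"
    using False assms(1) by (simp add: r_def)
  interpret subseqs "\<lambda>n s. convergent (\<lambda>k. f (s k) (r n))"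
  proof
    fix n and s :: "nat \<Rightarrow> nat"
    have "Bseq (\<lambda>k. f (s k) (r n))"
      using bounded[of "r n"] range_r by (auto intro: Bseq_subseq)
    then obtain r' where "strict_mono r'" "convergent ((\<lambda>k. f (s k) (r n)) \<circ> r')"
      using Bseq_convergent_subseq by blast
    then show "\<exists>r'. strict_mono r' \<and> convergent (\<lambda>k. f ((s \<circ> r') k) (r n))"
      by (auto simp: comp_def)
  qed
  have "convergent (\<lambda>k. f (diagseq k) (r n))" for n
  proof -
    have "convergent (\<lambda>k. f ((diagseq \<circ> (+) (Suc n)) k) (r n))"
      by (rule diagseq_holds) (auto dest: convergent_subseq_convergent simp: comp_def)
    then show ?thesis
      using convergent_ignore_initial_segment[of "\<lambda>k. f (diagseq k) (r n)" "Suc n"]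
      by (simp add: add.commute)
  qed
  then show ?thesis
    using subseq_diagseq range_r by blast
qed

text \<open>Helly's selection theorem needs a uniform bound, which composing with arctan supplies;
  pointwise boundedness keeps the limits away from the poles of tan. Helly only gives convergence
  at continuity points of the limit, and there are countably many others, handled diagonally.\<close>
lemma Helly_selection_pointwise_bounded:
  fixes f :: "nat \<Rightarrow> real \<Rightarrow> real"
  assumes rcont: "\<And>k x. continuous (at_right x) (f k)"
    and mono: "\<And>k. mono (f k)"
    and bounded: "\<And>x. Bseq (\<lambda>k. f k x)"
  shows "\<exists>s. strict_mono s \<and> (\<forall>x. convergent (\<lambda>k. f (s k) x))"
proof -
  define g where "g k x = arctan (f k x)" for k x
  have "continuous (at_right x) (g k)" for k x
    unfolding g_def[abs_def] using rcont by (intro continuous_within_compose3[OF isCont_arctan])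
  moreover have "mono (g k)" for k
    using mono by (auto simp: g_def mono_def arctan_le_iff)
  moreover have "\<bar>g k x\<bar> \<le> pi / 2" for k x
    unfolding g_def abs_le_iff using arctan_bounded[of "f k x"] by linarith
  ultimately obtain s F where s: "strict_mono s"
    and F: "mono F" "\<And>x. continuous (at x) F \<Longrightarrow> (\<lambda>k. g (s k) x) \<longlonglongrightarrow> F x"
    using Helly_selection[of g "pi / 2"] by blast
  define D where "D = {x. \<not> isCont F x}"
  obtain t where t: "strict_mono t" and conv_D: "\<forall>x\<in>D. convergent (\<lambda>k. f (s (t k)) x)"
    using countable_convergent_subseq[of D "\<lambda>k. f (s k)"] mono_ctble_discont[OF F(1)]
      bounded Bseq_subseq by (fastforce simp: D_def)
  have "convergent (\<lambda>k. f (s k) x)" if "x \<notin> D" for x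
  proof -
    have lim: "(\<lambda>k. g (s k) x) \<longlonglongrightarrow> F x"
      using that F(2) by (simp add: D_def)
    obtain B where bound: "\<And>k. \<bar>f k x\<bar> \<le> B"
      using bounded[of x] by (metis BseqE real_norm_def)
    have "- B \<le> f k x" "f k x \<le> B" for k
      using bound[of k] by linarith+
    then have "arctan (- B) \<le> F x" "F x \<le> arctan B"
      by (auto intro!: LIMSEQ_le_const[OF lim] LIMSEQ_le_const2[OF lim]
          simp: g_def arctan_le_iff abs_le_iff)
    then have "cos (F x) \<noteq> 0"
      using arctan_bounded[of B] arctan_bounded[of "- B"] cos_gt_zero_pi[of "F x"] by linarith
    then have "(\<lambda>k. tan (g (s k) x)) \<longlonglongrightarrow> tan (F x)"
      by (intro isCont_tendsto_compose[OF isCont_tan lim])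
    then show ?thesis
      by (auto simp: g_def tan_arctan convergent_def)
  qed
  then have "convergent (\<lambda>k. f (s (t k)) x)" for x
    using conv_D convergent_subseq_convergent[OF _ t] by (cases "x \<in> D") (auto simp: comp_def)
  then show ?thesis
    using strict_mono_o[OF s t] by (auto simp: comp_def)
qed

lemma incseq_subseq_at_top:
  fixes xs :: "nat \<Rightarrow> real"
  assumes "filterlim xs at_top sequentially"
  shows "\<exists>r. strict_mono r \<and> incseq (xs \<circ> r)"
proof -
  obtain r where r: "strict_mono r" "monoseq (xs \<circ> r)"
    using seq_monosub[of xs] by (auto simp: comp_def)
  have "filterlim (xs \<circ> r) at_top sequentially"
    using filterlim_compose[OF assms filterlim_subseq[OF r(1)]] by (simp add: comp_def)
  then obtain k where "(xs \<circ> r) 0 < (xs \<circ> r) k"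
    by (metis filterlim_at_top_dense eventually_sequentially order_refl)
  then have "\<not> decseq (xs \<circ> r)"
    using decseqD[of "xs \<circ> r" 0 k] by auto
  then show ?thesis
    using r by (auto simp: monoseq_iff)
qed

lemma class_L_tail_ratio_tendsto:
  assumes "\<nu> \<in> class_L \<gamma>" and "filterlim l at_top sequentially"
  shows "(\<lambda>k. tail \<nu> (l k + x) / tail \<nu> (l k)) \<longlonglongrightarrow> exp (- \<gamma> * x)"
proof -
  have pos: "\<And>y. tail \<nu> y > 0"
    and equiv: "(\<lambda>y. tail \<nu> (y + x)) \<sim>[at_top] (\<lambda>y. exp (- \<gamma> * x) * tail \<nu> y)"
    using assms(1) by (auto simp: class_L_def)
  have "((\<lambda>y. tail \<nu> (y + x) / (exp (- \<gamma> * x) * tail \<nu> y)) \<longlongrightarrow> 1) at_top"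
    using pos
    by (intro asymp_equivD_strong[OF equiv] always_eventually) (simp add: less_imp_neq[symmetric])
  then have "(\<lambda>k. tail \<nu> (l k + x) / (exp (- \<gamma> * x) * tail \<nu> (l k))) \<longlonglongrightarrow> 1"
    using assms(2) by (rule filterlim_compose)
  then have "(\<lambda>k. exp (- \<gamma> * x) * (tail \<nu> (l k + x) / (exp (- \<gamma> * x) * tail \<nu> (l k))))
      \<longlonglongrightarrow> exp (- \<gamma> * x) * 1"
    by (intro tendsto_intros)
  then show ?thesis
    by simp
qed

definition tail_ratio :: "real measure \<Rightarrow> nat \<Rightarrow> real \<Rightarrow> real \<Rightarrow> real" where
  "tail_ratio \<mu> n y x = tail \<mu> (y + x) / tail (conv_pow \<mu> n) y"

lemma Lambda1_iff:
  "l \<in> Lambda1 \<mu> n \<longleftrightarrow> incseq l \<and> filterlim l at_top sequentially \<and>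
     (\<forall>x. convergent (\<lambda>k. tail_ratio \<mu> n (l k) x))"
  by (simp add: Lambda1_def tail_ratio_def)

lemma mlim_eq_lim_tail_ratio: "mlim \<mu> n l x = lim (\<lambda>k. tail_ratio \<mu> n (l k) x)"
  by (simp add: mlim_def tail_ratio_def)

context real_distribution
begin

lemma antimono_tail_ratio: "antimono (tail_ratio M n y)"
  using antimono_tail tail_nonneg
  by (auto simp: tail_ratio_def antimono_def intro!: divide_right_mono)

lemma tail_ratio_continuous_at_right: "continuous (at_right x) (tail_ratio M n y)"
  unfolding tail_ratio_def[abs_def] divide_inverse
  by (intro continuous_intros tail_shift_continuous_at_right)

lemma mlim_antimono:
  assumes "l \<in> Lambda1 M n"
  shows "antimono (mlim M n l)"
proof (rule antimonoI)
  fix x y :: real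
  assume "x \<le> y"
  have lim: "(\<lambda>k. tail_ratio M n (l k) z) \<longlonglongrightarrow> mlim M n l z" for z
    using assms by (simp add: Lambda1_iff mlim_eq_lim_tail_ratio convergent_LIMSEQ_iff)
  have "tail_ratio M n (l k) y \<le> tail_ratio M n (l k) x" for k
    using antimono_tail_ratio \<open>x \<le> y\<close> by (auto dest: antimonoD)
  then show "mlim M n l y \<le> mlim M n l x"
    by (intro LIMSEQ_le[OF lim lim]) blast
qed

end

locale class_L_conv_pow = real_distribution \<mu> for \<mu> +
  fixes \<gamma> :: real and m :: nat
  assumes nonneg_mass_pos: "measure \<mu> {0..} > 0"
    and conv_pow_class_L: "conv_pow \<mu> (Suc m) \<in> class_L \<gamma>"
begin

lemma tail_ratio_le:
  "tail_ratio \<mu> (Suc m) y x \<le>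
     (1 / measure \<mu> {0..}) ^ m * (tail (conv_pow \<mu> (Suc m)) (y + x) / tail (conv_pow \<mu> (Suc m)) y)"
proof -
  have "tail \<mu> (y + x) * measure \<mu> {0..} ^ m \<le> tail (conv_pow \<mu> (Suc m)) (y + x)"
    by (rule tail_conv_pow_Suc_ge) unfold_locales
  then have "tail \<mu> (y + x) \<le> (1 / measure \<mu> {0..}) ^ m * tail (conv_pow \<mu> (Suc m)) (y + x)"
    using nonneg_mass_pos by (simp add: field_simps power_divide)
  moreover have "tail (conv_pow \<mu> (Suc m)) y > 0"
    using conv_pow_class_L by (simp add: class_L_def)
  ultimately show ?thesis
    by (simp add: tail_ratio_def divide_right_mono)
qed

lemma tail_ratio_bound_tendsto:
  assumes "filterlim l at_top sequentially"
  shows "(\<lambda>k. (1 / measure \<mu> {0..}) ^ m *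
            (tail (conv_pow \<mu> (Suc m)) (l k + x) / tail (conv_pow \<mu> (Suc m)) (l k)))
         \<longlonglongrightarrow> (1 / measure \<mu> {0..}) ^ m * exp (- \<gamma> * x)"
  by (intro tendsto_intros class_L_tail_ratio_tendsto[OF conv_pow_class_L assms])

lemma Bseq_tail_ratio:
  assumes "filterlim l at_top sequentially"
  shows "Bseq (\<lambda>k. tail_ratio \<mu> (Suc m) (l k) x)"
proof -
  obtain B where B: "\<And>k. (1 / measure \<mu> {0..}) ^ m *
      (tail (conv_pow \<mu> (Suc m)) (l k + x) / tail (conv_pow \<mu> (Suc m)) (l k)) \<le> B"
    using Bseq_bdd_above[OF convergent_imp_Bseq[OF convergentI[OF
          tail_ratio_bound_tendsto[OF assms]]]]
    by (auto simp: bdd_above_def)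
  have "norm (tail_ratio \<mu> (Suc m) (l k) x) \<le> B" for k
  proof -
    have "0 \<le> tail_ratio \<mu> (Suc m) (l k) x"
      by (simp add: tail_ratio_def tail_nonneg)
    then show ?thesis
      using tail_ratio_le[of "l k" x] B[of k] by simp
  qed
  then show ?thesis
    by (rule BseqI')
qed

lemma exists_subseq_in_Lambda1:
  assumes "filterlim xs at_top sequentially"
  shows "\<exists>r. strict_mono r \<and> xs \<circ> r \<in> Lambda1 \<mu> (Suc m)"
proof -
  obtain r where r: "strict_mono r" "incseq (xs \<circ> r)"
    using incseq_subseq_at_top[OF assms] by blast
  have r_at_top: "filterlim (xs \<circ> r) at_top sequentially"
    using filterlim_compose[OF assms filterlim_subseq[OF r(1)]] by (simp add: comp_def)
  have "\<exists>s. strict_mono s \<and> (\<forall>x. convergent (\<lambda>k. - tail_ratio \<mu> (Suc m) ((xs \<circ> r) (s k)) x))"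
  proof (rule Helly_selection_pointwise_bounded)
    show "continuous (at_right x) (\<lambda>x. - tail_ratio \<mu> (Suc m) ((xs \<circ> r) k) x)" for k x
      by (intro continuous_intros tail_ratio_continuous_at_right)
    show "mono (\<lambda>x. - tail_ratio \<mu> (Suc m) ((xs \<circ> r) k) x)" for k
      using antimono_tail_ratio by (auto simp: mono_def antimono_def)
    show "Bseq (\<lambda>k. - tail_ratio \<mu> (Suc m) ((xs \<circ> r) k) x)" for x
      using Bseq_tail_ratio[OF r_at_top] by (simp add: Bseq_minus_iff)
  qed
  then obtain s where s: "strict_mono s"
    and conv: "\<And>x. convergent (\<lambda>k. tail_ratio \<mu> (Suc m) ((xs \<circ> r) (s k)) x)"
    by (auto simp: convergent_minus_iff[symmetric])
  have "incseq (xs \<circ> (r \<circ> s))"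
    using r(2) strict_mono_mono[OF s] by (auto simp: incseq_def monoD)
  moreover have "filterlim (xs \<circ> (r \<circ> s)) at_top sequentially"
    using filterlim_compose[OF r_at_top filterlim_subseq[OF s]] by (simp add: comp_def)
  ultimately have "xs \<circ> (r \<circ> s) \<in> Lambda1 \<mu> (Suc m)"
    using conv by (simp add: Lambda1_iff)
  then show ?thesis
    using strict_mono_o[OF r(1) s] by blast
qed

lemma exp_mlim_le:
  assumes "l \<in> Lambda1 \<mu> (Suc m)"
  shows "exp (\<gamma> * x) * mlim \<mu> (Suc m) l x \<le> (1 / measure \<mu> {0..}) ^ m"
proof -
  have "(\<lambda>k. tail_ratio \<mu> (Suc m) (l k) x) \<longlonglongrightarrow> mlim \<mu> (Suc m) l x"
    using assms by (simp add: Lambda1_iff mlim_eq_lim_tail_ratio convergent_LIMSEQ_iff)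
  then have "mlim \<mu> (Suc m) l x \<le> (1 / measure \<mu> {0..}) ^ m * exp (- \<gamma> * x)"
    using assms tail_ratio_le
    by (intro LIMSEQ_le[OF _ tail_ratio_bound_tendsto]) (auto simp: Lambda1_iff)
  then have "exp (\<gamma> * x) * mlim \<mu> (Suc m) l x \<le>
      exp (\<gamma> * x) * ((1 / measure \<mu> {0..}) ^ m * exp (- \<gamma> * x))"
    by (rule mult_left_mono) simp
  then show ?thesis
    by (simp add: exp_minus field_simps)
qed

end

theorem lemma5p1:
  fixes \<mu> :: "real measure" and \<gamma> :: real and n :: nat
  assumes "prob_space \<mu>" and "sets \<mu> = sets borel"
    and "\<gamma> > 0" and "n \<ge> 2"
    and "\<forall>x. tail \<mu> x > 0"
    and "conv_pow \<mu> n \<in> class_S \<gamma>"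
  defines "d \<equiv> measure \<mu> {0..}"
  shows "(\<forall>xs :: nat \<Rightarrow> real. filterlim xs at_top sequentially \<longrightarrow>
            (\<exists>r. strict_mono r \<and> xs \<circ> r \<in> Lambda1 \<mu> n))
       \<and> (\<forall>l \<in> Lambda1 \<mu> n. antimono (mlim \<mu> n l) \<and>
            (\<forall>x. exp (\<gamma> * x) * mlim \<mu> n l x \<le> (1 / d) ^ (n - 1)))"
proof -
  interpret real_distribution \<mu>
    using assms(1,2) by (simp add: real_distribution_def real_distribution_axioms_def)
  have "0 < tail \<mu> 0"
    using assms(5) by blast
  also have "tail \<mu> 0 \<le> d"
    unfolding tail_def d_def by (intro finite_measure_mono) auto
  finally have "d > 0" .
  obtain m where n: "n = Suc m"
    using assms(4) by (cases n) auto
  interpret class_L_conv_pow \<mu> \<gamma> m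
    using \<open>d > 0\<close> assms(6) by unfold_locales (simp_all add: class_S_def n d_def)
  show ?thesis
    using exists_subseq_in_Lambda1 mlim_antimono exp_mlim_le by (simp add: n d_def)
qed

end
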